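(* In the standing setting below, the cost function $c$ satisfies Loeper's property if and only if the following holds: for all $X_i=(x_i,u_i)\in\mathbb{X}\times\mathbb{R}$ ($i=0,1$), all $y\in\mathbb{Y}$ and $h\in\mathbb{R}$ with $-c(x_i,y)+h=u_i$ for $i=0,1$, and every point $x_t$ of the $c$-segment with respect to $y$ from $x_0$ to $x_1$, one has $F_{X_0X_1}(x_t)=-c(x_t,y)+h$.
   Context: Standing setting: $\mathbb{X},\mathbb{Y}\subset\mathbb{R}^n$ are compact with non-empty interior; $c:\mathbb{X}\times\mathbb{Y}\to\mathbb{R}$ has continuous $D_xc$, $D_yc$, and continuous mixed second derivatives with $D^2_{xy}c=(D^2_{yx}c)^T$; for each $x$ the map $y\mapsto -D_xc(x,y)$ is injective on $\mathbb{Y}$ and for each $y$ the map $x\mapsto -D_yc(x,y)$ is injective on $\mathbb{X}$; $D^2_{xy}c(x,y)$ is invertible everywhere; for every $y$ the set $[\mathbb{X}]_y=\{-D_yc(x,y):x\in\mathbb{X}\}$ is convex and for every $x$ the set $[\mathbb{Y}]_x=\{-D_xc(x,y):y\in\mathbb{Y}\}$ is convex. $\exp^c_y:[\mathbb{X}]_y\to\mathbb{X}$ is the inverse of $x\mapsto -D_yc(x,y)$. For $x_0,x_1\in\mathbb{X}$, $y\in\mathbb{Y}$, $p_i=-D_yc(x_i,y)$, the $c$-segment with respect to $y$ from $x_0$ to $x_1$ is $\{x_t=\exp^c_y(tp_1+(1-t)p_0):t\in[0,1]\}$. Loeper's property: for all $x_0,x_1\in\mathbb{X}$, $y_0,y\in\mathbb{Y}$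 and every $x_t$ on the $c$-segment with respect to $y_0$ from $x_0$ to $x_1$, $-c(x_t,y)+c(x_t,y_0)\le\max\{-c(x_i,y)+c(x_i,y_0):i=0,1\}$. $c$-chord: for $X_i=(x_i,u_i)\in\mathbb{X}\times\mathbb{R}$, $F_{X_0X_1}(x)=\sup\{-c(x,y)+h: y\in\mathbb{Y},h\in\mathbb{R},-c(x_i,y)+h\le u_i, i=0,1\}$. *)

theory Defs
  imports "HOL-Analysis.Analysis"
begin

text \<open>Ambient space R^n is modelled by a Euclidean space type 'a.
  Dx x y and Dy x y are the gradients D_x c(x,y), D_y c(x,y).\<close>

definition cexp :: "'a set \<Rightarrow> ('a \<Rightarrow> 'a \<Rightarrow> 'a) \<Rightarrow> 'a \<Rightarrow> 'a \<Rightarrow> 'a::euclidean_space" where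
  "cexp X Dy y p = the_inv_into X (\<lambda>x. - Dy x y) p"

definition cseg_pt :: "'a set \<Rightarrow> ('a \<Rightarrow> 'a \<Rightarrow> 'a) \<Rightarrow> 'a \<Rightarrow> 'a \<Rightarrow> 'a \<Rightarrow> real \<Rightarrow> 'a::euclidean_space" where
  "cseg_pt X Dy y x0 x1 t = cexp X Dy y (t *\<^sub>R (- Dy x1 y) + (1 - t) *\<^sub>R (- Dy x0 y))"

definition c_segment :: "'a set \<Rightarrow> ('a \<Rightarrow> 'a \<Rightarrow> 'a) \<Rightarrow> 'a \<Rightarrow> 'a \<Rightarrow> 'a \<Rightarrow> 'a::euclidean_space set" where
  "c_segment X Dy y x0 x1 = (\<lambda>t. cseg_pt X Dy y x0 x1 t) ` {0..1}"

definition loeper :: "'a::euclidean_space set \<Rightarrow> 'a set \<Rightarrow> ('a \<Rightarrow> 'a \<Rightarrow> real) \<Rightarrow> ('a \<Rightarrow> 'a \<Rightarrow> 'a) \<Rightarrow> bool" where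
  "loeper X Y c Dy \<longleftrightarrow>
     (\<forall>x0\<in>X. \<forall>x1\<in>X. \<forall>y0\<in>Y. \<forall>y\<in>Y. \<forall>xt\<in>c_segment X Dy y0 x0 x1.
        - c xt y + c xt y0 \<le> max (- c x0 y + c x0 y0) (- c x1 y + c x1 y0))"

definition c_chord :: "'a::euclidean_space set \<Rightarrow> ('a \<Rightarrow> 'a \<Rightarrow> real) \<Rightarrow> 'a \<times> real \<Rightarrow> 'a \<times> real \<Rightarrow> 'a \<Rightarrow> real" where
  "c_chord Y c X0 X1 x = Sup {- c x y + h | y h. y \<in> Y \<and>
       - c (fst X0) y + h \<le> snd X0 \<and> - c (fst X1) y + h \<le> snd X1}"

end

theory Submission
  imports Defs
begin

text \<open>For a fixed \<open>y\<^sub>0\<close>, the c-affine function \<open>-c(\<cdot>,y\<^sub>0) + h\<close> passes through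
  both points \<open>X\<^sub>i\<close>, so it competes in the supremum defining the c-chord. For any
  other \<open>y\<close>, the largest admissible level is \<open>h' = h - max\<^sub>i (c(x\<^sub>i,y\<^sub>0) - c(x\<^sub>i,y))\<close>,
  and \<open>-c(x\<^sub>t,y) + h' \<le> -c(x\<^sub>t,y\<^sub>0) + h\<close> is exactly Loeper's inequality at \<open>x\<^sub>t\<close>.
  Hence the c-chord agrees with \<open>-c(\<cdot>,y\<^sub>0) + h\<close> at \<open>x\<^sub>t\<close> iff Loeper's inequality
  holds there. Beyond this, one only needs that c-segments stay in \<open>X\<close> and that
  the supremum is finite (compactness of \<open>Y\<close>, continuity of \<open>c\<close> in \<open>y\<close>).\<close>

lemma c_segment_subset:
  assumes "inj_on (\<lambda>x. - Dy x y) X" "convex ((\<lambda>x. - Dy x y) ` X)" "x0 \<in> X" "x1 \<in> X"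
  shows "c_segment X Dy y x0 x1 \<subseteq> X"
proof
  fix xt assume "xt \<in> c_segment X Dy y x0 x1"
  then obtain t where t: "t \<in> {0..1}" "xt = cseg_pt X Dy y x0 x1 t"
    unfolding c_segment_def by auto
  have "t *\<^sub>R (- Dy x1 y) + (1 - t) *\<^sub>R (- Dy x0 y) \<in> (\<lambda>x. - Dy x y) ` X"
    using t(1) assms by (intro convexD) auto
  then show "xt \<in> X"
    unfolding t(2) cseg_pt_def cexp_def by (metis assms(1) the_inv_into_into order_refl)
qed

lemma c_chord_upper:
  assumes bdd: "bdd_above ((\<lambda>y. c x0 y - c x y) ` Y)"
    and "y \<in> Y" "- c x0 y + h \<le> u0" "- c x1 y + h \<le> u1"
  shows "- c x y + h \<le> c_chord Y c (x0, u0) (x1, u1) x"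
proof -
  let ?S = "{- c x y + h | y h. y \<in> Y \<and> - c x0 y + h \<le> u0 \<and> - c x1 y + h \<le> u1}"
  obtain B where B: "\<And>y. y \<in> Y \<Longrightarrow> c x0 y - c x y \<le> B"
    using bdd by (auto simp: bdd_above_def)
  have "bdd_above ?S"
    by (rule bdd_aboveI[where M = "B + u0"]) (fastforce dest: B)
  moreover have "- c x y + h \<in> ?S"
    using assms(2-4) by blast
  ultimately show ?thesis
    unfolding c_chord_def by (simp add: cSup_upper)
qed

lemma c_chord_eq_maximum:
  assumes "y0 \<in> Y"
    and "\<And>y h'. y \<in> Y \<Longrightarrow> - c x0 y + h' \<le> u0 \<Longrightarrow> - c x1 y + h' \<le> u1 \<Longrightarrow>
      - c x y + h' \<le> - c x y0 + h"
    and "- c x0 y0 + h \<le> u0" "- c x1 y0 + h \<le> u1"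
  shows "c_chord Y c (x0, u0) (x1, u1) x = - c x y0 + h"
  unfolding c_chord_def fst_conv snd_conv
  by (rule cSup_eq_maximum) (use assms in blast)+

lemma c_chord_eq_iff_loeper_ineq:
  assumes y0: "y0 \<in> Y" and bdd: "bdd_above ((\<lambda>y. c x0 y - c x y) ` Y)"
  shows "c_chord Y c (x0, - c x0 y0 + h) (x1, - c x1 y0 + h) x = - c x y0 + h \<longleftrightarrow>
    (\<forall>y\<in>Y. - c x y + c x y0 \<le> max (- c x0 y + c x0 y0) (- c x1 y + c x1 y0))"
proof
  assume chord: "c_chord Y c (x0, - c x0 y0 + h) (x1, - c x1 y0 + h) x = - c x y0 + h"
  show "\<forall>y\<in>Y. - c x y + c x y0 \<le> max (- c x0 y + c x0 y0) (- c x1 y + c x1 y0)"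
  proof
    fix y assume "y \<in> Y"
    define M where "M = max (- c x0 y + c x0 y0) (- c x1 y + c x1 y0)"
    have "- c x y + (h - M) \<le> c_chord Y c (x0, - c x0 y0 + h) (x1, - c x1 y0 + h) x"
      using bdd \<open>y \<in> Y\<close> by (rule c_chord_upper) (simp_all add: M_def)
    then show "- c x y + c x y0 \<le> M"
      using chord by linarith
  qed
next
  assume "\<forall>y\<in>Y. - c x y + c x y0 \<le> max (- c x0 y + c x0 y0) (- c x1 y + c x1 y0)"
  then show "c_chord Y c (x0, - c x0 y0 + h) (x1, - c x1 y0 + h) x = - c x y0 + h"
    using y0 by (intro c_chord_eq_maximum) (fastforce simp: max_def split: if_splits)+
qed

lemma bdd_above_diff_image_compact:
  fixes f g :: "'a::topological_space \<Rightarrow> real"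
  assumes "compact Y" "continuous_on Y f" "continuous_on Y g"
  shows "bdd_above ((\<lambda>y. f y - g y) ` Y)"
  using assms by (intro bounded_imp_bdd_above compact_imp_bounded compact_continuous_image
      continuous_intros)

theorem proposition3p9:
  fixes X Y :: "'a::euclidean_space set"
    and c :: "'a \<Rightarrow> 'a \<Rightarrow> real"
    and Dx Dy :: "'a \<Rightarrow> 'a \<Rightarrow> 'a"
    and Dxy Dyx :: "'a \<Rightarrow> 'a \<Rightarrow> 'a \<Rightarrow>\<^sub>L 'a"
  assumes "compact X" "interior X \<noteq> {}" "compact Y" "interior Y \<noteq> {}"
    and Dx: "\<And>x y. x \<in> X \<Longrightarrow> y \<in> Y \<Longrightarrow>
               ((\<lambda>x'. c x' y) has_derivative (\<lambda>v. Dx x y \<bullet> v)) (at x within X)"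
    and Dy: "\<And>x y. x \<in> X \<Longrightarrow> y \<in> Y \<Longrightarrow>
               ((\<lambda>y'. c x y') has_derivative (\<lambda>v. Dy x y \<bullet> v)) (at y within Y)"
    and "continuous_on (X \<times> Y) (\<lambda>(x, y). Dx x y)"
    and "continuous_on (X \<times> Y) (\<lambda>(x, y). Dy x y)"
    and Dxy: "\<And>x y. x \<in> X \<Longrightarrow> y \<in> Y \<Longrightarrow>
               ((\<lambda>y'. Dx x y') has_derivative blinfun_apply (Dxy x y)) (at y within Y)"
    and Dyx: "\<And>x y. x \<in> X \<Longrightarrow> y \<in> Y \<Longrightarrow>
               ((\<lambda>x'. Dy x' y) has_derivative blinfun_apply (Dyx x y)) (at x within X)"
    and "continuous_on (X \<times> Y) (\<lambda>(x, y). Dxy x y)"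
    and "continuous_on (X \<times> Y) (\<lambda>(x, y). Dyx x y)"
    and transp: "\<And>x y u v. x \<in> X \<Longrightarrow> y \<in> Y \<Longrightarrow>
               blinfun_apply (Dxy x y) u \<bullet> v = u \<bullet> blinfun_apply (Dyx x y) v"
    and "\<And>x. x \<in> X \<Longrightarrow> inj_on (\<lambda>y. - Dx x y) Y"
    and "\<And>y. y \<in> Y \<Longrightarrow> inj_on (\<lambda>x. - Dy x y) X"
    and "\<And>x y. x \<in> X \<Longrightarrow> y \<in> Y \<Longrightarrow> bij (blinfun_apply (Dxy x y))"
    and "\<And>y. y \<in> Y \<Longrightarrow> convex ((\<lambda>x. - Dy x y) ` X)"
    and "\<And>x. x \<in> X \<Longrightarrow> convex ((\<lambda>y. - Dx x y) ` Y)"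
  shows "loeper X Y c Dy \<longleftrightarrow>
     (\<forall>x0\<in>X. \<forall>x1\<in>X. \<forall>u0 u1::real. \<forall>y\<in>Y. \<forall>h::real.
        (- c x0 y + h = u0 \<and> - c x1 y + h = u1) \<longrightarrow>
        (\<forall>xt\<in>c_segment X Dy y x0 x1. c_chord Y c (x0, u0) (x1, u1) xt = - c xt y + h))"
proof -
  have continuous_c: "continuous_on Y (c x)" if "x \<in> X" for x
    using Dy[OF that] by (rule has_derivative_continuous_on)
  have chord_iff: "c_chord Y c (x0, - c x0 y0 + h) (x1, - c x1 y0 + h) xt = - c xt y0 + h \<longleftrightarrow>
      (\<forall>y\<in>Y. - c xt y + c xt y0 \<le> max (- c x0 y + c x0 y0) (- c x1 y + c x1 y0))"
    if "x0 \<in> X" "x1 \<in> X" "y0 \<in> Y" "xt \<in> c_segment X Dy y0 x0 x1" for x0 x1 y0 xt h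
  proof -
    have "xt \<in> X"
      using c_segment_subset[of Dy y0 X x0 x1] that assms(15,17) by blast
    then show ?thesis
      using that assms(3) continuous_c
      by (intro c_chord_eq_iff_loeper_ineq bdd_above_diff_image_compact) auto
  qed
  show ?thesis
    unfolding loeper_def using chord_iff chord_iff[where h = 0] by blast
qed

end
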